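(* Every countably infinite line graph $G$ admits a majority $2$-vertex-coloring, i.e. there is a partition $V(G)=V_1\cup V_2$ such that for each $i\in\{1,2\}$ and each $v\in V_i$, $|N(v)\cap V_i|\le |N(v)\setminus V_i|$ (as cardinalities).
   Context: $N(v)$ denotes the set of neighbors of $v$ in $G$. A line graph is the line graph $L(H)$ of some graph $H$: its vertices are the edges of $H$, two being adjacent iff they share an endvertex. *)

theory Defs
  imports Main "HOL-Library.Equipollence"
begin

definition simple_graph :: "'a set \<Rightarrow> ('a \<Rightarrow> 'a \<Rightarrow> bool) \<Rightarrow> bool" where
  "simple_graph V E \<longleftrightarrow> (\<forall>u v. E u v \<longrightarrow> u \<in> V \<and> v \<in> V \<and> u \<noteq> v \<and> E v u)"

definition nbhd :: "('a \<Rightarrow> 'a \<Rightarrow> bool) \<Rightarrow> 'a \<Rightarrow> 'a set" where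
  "nbhd E v = {u. E v u}"

definition edge_set :: "('h \<Rightarrow> 'h \<Rightarrow> bool) \<Rightarrow> 'h set set" where
  "edge_set F = {{x, y} | x y. F x y}"

definition is_line_graph_of ::
  "'a set \<Rightarrow> ('a \<Rightarrow> 'a \<Rightarrow> bool) \<Rightarrow> 'h set \<Rightarrow> ('h \<Rightarrow> 'h \<Rightarrow> bool) \<Rightarrow> bool" where
  "is_line_graph_of V E W F \<longleftrightarrow> simple_graph W F \<and>
     (\<exists>\<phi>. bij_betw \<phi> V (edge_set F) \<and>
        (\<forall>u\<in>V. \<forall>v\<in>V. E u v \<longleftrightarrow> u \<noteq> v \<and> \<phi> u \<inter> \<phi> v \<noteq> {}))"

definition majority_2_colouring :: "'a set \<Rightarrow> ('a \<Rightarrow> 'a \<Rightarrow> bool) \<Rightarrow> 'a set \<Rightarrow> 'a set \<Rightarrow> bool" where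
  "majority_2_colouring V E V1 V2 \<longleftrightarrow> V1 \<union> V2 = V \<and> V1 \<inter> V2 = {} \<and>
     (\<forall>Vi \<in> {V1, V2}. \<forall>v \<in> Vi. nbhd E v \<inter> Vi \<lesssim> nbhd E v - Vi)"

end

theory Submission
  imports Defs "HOL-Library.Countable_Set"
begin

text \<open>In a line graph L(H), a vertex of infinite degree is an edge of H with an endvertex x of
infinite degree, so it lies in the star of x, an infinite clique of L(H); two stars share at most
one vertex. Shrink the countably many infinite stars to pairwise disjoint infinite sets and split
each into two infinite colour classes: every vertex of infinite degree then has infinitely many
neighbours of the other colour, which outnumber its countably many neighbours of its own colour.
Keeping these colours fixed, recolour the vertices of finite degree: on a finite set of them, a
colouring with the fewest monochromatic edges is a majority colouring there, and Koenig's lemma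
passes to all of them.\<close>

lemma simple_graph_nbhd_subset: "simple_graph V E \<Longrightarrow> nbhd E v \<subseteq> V"
  by (auto simp: simple_graph_def nbhd_def)

definition majority_at :: "('a \<Rightarrow> 'a \<Rightarrow> bool) \<Rightarrow> ('a \<Rightarrow> bool) \<Rightarrow> 'a \<Rightarrow> bool" where
  "majority_at E c v \<longleftrightarrow> {w \<in> nbhd E v. c w = c v} \<lesssim> {w \<in> nbhd E v. c w \<noteq> c v}"

lemma majority_at_cong:
  assumes "\<And>w. w \<in> insert v (nbhd E v) \<Longrightarrow> c' w = c w"
  shows "majority_at E c' v \<longleftrightarrow> majority_at E c v"
proof -
  have "{w \<in> nbhd E v. c' w = c' v} = {w \<in> nbhd E v. c w = c v}"
       "{w \<in> nbhd E v. c' w \<noteq> c' v} = {w \<in> nbhd E v. c w \<noteq> c v}"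
    using assms by auto
  then show ?thesis by (simp add: majority_at_def)
qed

lemma majority_at_iff_card_le:
  assumes "finite (nbhd E v)"
  shows "majority_at E c v \<longleftrightarrow>
           card {w \<in> nbhd E v. c w = c v} \<le> card {w \<in> nbhd E v. c w \<noteq> c v}"
  using assms by (simp add: majority_at_def lepoll_iff_card_le)

lemma majority_at_if_both_colours_infinite:
  assumes "countable (nbhd E v)"
    and "infinite {w \<in> nbhd E v. c w}" and "infinite {w \<in> nbhd E v. \<not> c w}"
  shows "majority_at E c v"
proof -
  have "{w \<in> nbhd E v. c w = c v} \<lesssim> (UNIV :: nat set)"
    using countable_subset[OF _ assms(1)] by (auto simp: countable_def lepoll_def)
  also have "infinite {w \<in> nbhd E v. c w \<noteq> c v}"
    using assms(2,3) by (cases "c v") simp_all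
  then have "(UNIV :: nat set) \<lesssim> {w \<in> nbhd E v. c w \<noteq> c v}"
    by (simp add: infinite_le_lepoll)
  finally show ?thesis by (simp add: majority_at_def)
qed

lemma majority_at_in_bicoloured_clique:
  assumes "countable (nbhd E v)" and clique: "\<And>u w. u \<in> K \<Longrightarrow> w \<in> K \<Longrightarrow> u \<noteq> w \<Longrightarrow> E u w"
    and "v \<in> K" and "infinite {u \<in> K. c u}" and "infinite {u \<in> K. \<not> c u}"
  shows "majority_at E c v"
proof (rule majority_at_if_both_colours_infinite)
  have "K - {v} \<subseteq> nbhd E v"
    using clique \<open>v \<in> K\<close> by (auto simp: nbhd_def)
  then have "{u \<in> K. c u} - {v} \<subseteq> {w \<in> nbhd E v. c w}"
    and "{u \<in> K. \<not> c u} - {v} \<subseteq> {w \<in> nbhd E v. \<not> c w}"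
    by auto
  then show "infinite {w \<in> nbhd E v. c w}" and "infinite {w \<in> nbhd E v. \<not> c w}"
    using assms(4,5) by (auto dest: infinite_super)
qed fact

lemma majority_2_colouringI:
  assumes "\<And>v. nbhd E v \<subseteq> V" and "\<forall>v\<in>V. majority_at E c v"
  shows "majority_2_colouring V E {v \<in> V. c v} {v \<in> V. \<not> c v}"
  unfolding majority_2_colouring_def
proof (intro conjI ballI)
  fix Vi v assume Vi: "Vi \<in> {{v \<in> V. c v}, {v \<in> V. \<not> c v}}" and "v \<in> Vi"
  then have "nbhd E v \<inter> Vi = {w \<in> nbhd E v. c w = c v}"
    and "nbhd E v - Vi = {w \<in> nbhd E v. c w \<noteq> c v}"
    using assms(1)[of v] by auto
  with assms(2) Vi \<open>v \<in> Vi\<close> show "nbhd E v \<inter> Vi \<lesssim> nbhd E v - Vi"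
    by (auto simp: majority_at_def)
qed auto

definition monochromatic_pairs ::
  "('a \<Rightarrow> 'a \<Rightarrow> bool) \<Rightarrow> 'a set \<Rightarrow> ('a \<Rightarrow> bool) \<Rightarrow> ('a \<times> 'a) set" where
  "monochromatic_pairs E D c = {(u, w). E u w \<and> (u \<in> D \<or> w \<in> D) \<and> c u = c w}"

lemma finite_monochromatic_pairs:
  assumes "symp E" and "finite D" and "\<forall>u\<in>D. finite (nbhd E u)"
  shows "finite (monochromatic_pairs E D c)"
proof -
  have "monochromatic_pairs E D c \<subseteq> Sigma D (nbhd E) \<union> prod.swap ` Sigma D (nbhd E)"
    using assms(1) by (auto simp: monochromatic_pairs_def nbhd_def image_iff dest: sympD)
  moreover have "finite (Sigma D (nbhd E))" using assms(2,3) by blast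
  ultimately show ?thesis by (meson finite_Un finite_imageI finite_subset)
qed

lemma card_monochromatic_pairs:
  assumes "symp E" and "irreflp E" and "finite D" and "\<forall>u\<in>D. finite (nbhd E u)"
    and "v \<in> D"
  shows "card (monochromatic_pairs E D c) =
           card {p \<in> monochromatic_pairs E D c. v \<notin> {fst p, snd p}}
           + 2 * card {w \<in> nbhd E v. c w = c v}"
proof -
  let ?M = "monochromatic_pairs E D c"
  let ?S = "{w \<in> nbhd E v. c w = c v}"
  let ?Y = "{p \<in> ?M. v \<notin> {fst p, snd p}}"
  let ?out = "Pair v ` ?S" and ?in = "(\<lambda>w. (w, v)) ` ?S"
  have split: "?M = ?Y \<union> (?out \<union> ?in)"
    using assms(1,5) by (auto simp: monochromatic_pairs_def nbhd_def dest: sympD)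
  have "finite ?S" using assms(4,5) by auto
  moreover have "finite ?Y" using finite_monochromatic_pairs[OF assms(1,3,4)] by auto
  moreover have "?out \<inter> ?in = {}" using assms(2) by (auto simp: nbhd_def irreflpD)
  moreover have "card ?out = card ?S" "card ?in = card ?S"
    by (auto intro: card_image simp: inj_on_def)
  ultimately show ?thesis
    by (subst split, subst card_Un_disjoint) (auto simp: card_Un_disjoint)
qed

text \<open>Recolouring a vertex with more neighbours of its own colour than of the other would
lower the number of monochromatic pairs by twice the excess.\<close>

lemma finite_majority_extension:
  assumes "symp E" and "irreflp E" and "finite D" and "\<forall>u\<in>D. finite (nbhd E u)"
  shows "\<exists>c. (\<forall>u. u \<notin> D \<longrightarrow> c u = c0 u) \<and> (\<forall>v\<in>D. majority_at E c v)"
proof -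
  obtain c where c: "\<forall>u. u \<notin> D \<longrightarrow> c u = c0 u"
    and least: "\<And>c'. \<forall>u. u \<notin> D \<longrightarrow> c' u = c0 u \<Longrightarrow>
                  card (monochromatic_pairs E D c) \<le> card (monochromatic_pairs E D c')"
    using ex_has_least_nat[of "\<lambda>c. \<forall>u. u \<notin> D \<longrightarrow> c u = c0 u" c0
        "\<lambda>c. card (monochromatic_pairs E D c)"] by auto
  have "majority_at E c v" if v: "v \<in> D" for v
  proof (rule ccontr)
    assume "\<not> majority_at E c v"
    then have more_same: "card {w \<in> nbhd E v. c w \<noteq> c v} < card {w \<in> nbhd E v. c w = c v}"
      using assms(4) v by (simp add: majority_at_iff_card_le)
    define c' where "c' = c(v := \<not> c v)"
    have same_pairs: "{p \<in> monochromatic_pairs E D c'. v \<notin> {fst p, snd p}} =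
          {p \<in> monochromatic_pairs E D c. v \<notin> {fst p, snd p}}"
      by (auto simp: monochromatic_pairs_def c'_def)
    have swapped: "{w \<in> nbhd E v. c' w = c' v} = {w \<in> nbhd E v. c w \<noteq> c v}"
      using assms(2) by (auto simp: c'_def nbhd_def irreflpD)
    have "card (monochromatic_pairs E D c') < card (monochromatic_pairs E D c)"
      using more_same card_monochromatic_pairs[OF assms v, of c]
        card_monochromatic_pairs[OF assms v, of c'] unfolding same_pairs swapped by linarith
    moreover have "card (monochromatic_pairs E D c) \<le> card (monochromatic_pairs E D c')"
      using c v by (intro least) (simp add: c'_def)
    ultimately show False by linarith
  qed
  with c show ?thesis by blast
qed

lemma bool_seq_compactness:
  fixes C :: "nat \<Rightarrow> (nat \<Rightarrow> bool) set" and k :: "nat \<Rightarrow> nat"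
  assumes local: "\<And>n f g. f \<in> C n \<Longrightarrow> (\<And>i. i < k n \<Longrightarrow> g i = f i) \<Longrightarrow> g \<in> C n"
    and finitely_satisfiable: "\<And>n. \<exists>f. \<forall>m\<le>n. f \<in> C m"
  shows "\<exists>f. \<forall>n. f \<in> C n"
proof -
  define extendable where
    "extendable j p \<longleftrightarrow> (\<forall>n. \<exists>f. (\<forall>m\<le>n. f \<in> C m) \<and> (\<forall>i<j. f i = p i))" for j p
  have extendable_0: "extendable 0 p" for p
    using finitely_satisfiable by (simp add: extendable_def)
  have extendable_Suc: "\<exists>b. extendable (Suc j) (p(j := b))" if ext: "extendable j p" for j p
  proof (rule ccontr)
    assume "\<nexists>b. extendable (Suc j) (p(j := b))"
    then obtain N where N: "\<And>b f. \<forall>m\<le>N b. f \<in> C m \<Longrightarrow> \<not> (\<forall>i<Suc j. f i = (p(j := b)) i)"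
      unfolding extendable_def by metis
    obtain f where "\<forall>m\<le>max (N True) (N False). f \<in> C m" and "\<forall>i<j. f i = p i"
      using ext unfolding extendable_def by blast
    moreover have "\<forall>i<Suc j. f i = (p(j := f j)) i"
      using \<open>\<forall>i<j. f i = p i\<close> by (auto simp: less_Suc_eq)
    ultimately show False
      using N[of "f j" f] by (cases "f j") auto
  qed
  define P where "P = rec_nat (\<lambda>_. False) (\<lambda>j p. p(j := extendable (Suc j) (p(j := True))))"
  have P_Suc: "P (Suc j) = (P j)(j := extendable (Suc j) ((P j)(j := True)))" for j
    by (simp add: P_def)
  have extendable_P: "extendable j (P j)" for j
  proof (induction j)
    case 0
    then show ?case by (rule extendable_0)
  next
    case (Suc j)
    then obtain b where b: "extendable (Suc j) ((P j)(j := b))"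
      using extendable_Suc by blast
    show ?case
    proof (cases "extendable (Suc j) ((P j)(j := True))")
      case True
      then show ?thesis by (metis (full_types) P_Suc)
    next
      case False
      with b have "\<not> b" by (metis (full_types))
      with b False show ?thesis by (metis (full_types) P_Suc)
    qed
  qed
  have P_stable: "P j i = P (Suc i) i" if "i < j" for i j
    using that by (induction j) (auto simp: P_Suc less_Suc_eq)
  have "(\<lambda>i. P (Suc i) i) \<in> C n" for n
  proof -
    obtain f where "f \<in> C n" and "\<forall>i<k n. f i = P (k n) i"
      using extendable_P[of "k n"] unfolding extendable_def by blast
    have agree: "P (Suc i) i = f i" if "i < k n" for i
      using \<open>\<forall>i<k n. f i = P (k n) i\<close> P_stable[OF that] that by simp
    show ?thesis
      using local[OF \<open>f \<in> C n\<close> agree] .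
  qed
  then show ?thesis by blast
qed

lemma countable_majority_extension:
  assumes "symp E" and "irreflp E" and "countable A" and "\<forall>v\<in>A. finite (nbhd E v)"
  shows "\<exists>c. (\<forall>u. u \<notin> A \<longrightarrow> c u = c0 u) \<and> (\<forall>v\<in>A. majority_at E c v)"
proof (cases "A = {}")
  case True
  then show ?thesis by auto
next
  case False
  define a where "a = from_nat_into A"
  define idx where "idx = to_nat_on A"
  have a_idx: "a (idx v) = v" if "v \<in> A" for v
    using assms(3) that by (simp add: a_def idx_def)
  have a_in: "a n \<in> A" for n
    using False by (simp add: a_def from_nat_into)
  \<comment> \<open>Colourings of A are coded as bit sequences along the enumeration a; the majority
    condition at a n reads only the bits below k n.\<close>
  define col where "col f v = (if v \<in> A then f (idx v) else c0 v)" for f v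
  define C where "C n = {f. majority_at E (col f) (a n)}" for n
  define k where "k n = Suc (Max (idx ` (insert (a n) (nbhd E (a n)) \<inter> A)))" for n
  have "\<exists>f. \<forall>n. f \<in> C n"
  proof (rule bool_seq_compactness)
    fix n f g assume "f \<in> C n" and agree: "\<And>i. i < k n \<Longrightarrow> g i = f i"
    have same_colours: "col g w = col f w" if "w \<in> insert (a n) (nbhd E (a n))" for w
    proof (cases "w \<in> A")
      case True
      have "finite (insert (a n) (nbhd E (a n)) \<inter> A)"
        using assms(4) a_in by blast
      then have "idx w < k n"
        using that True by (simp add: k_def le_imp_less_Suc)
      then show ?thesis using True agree by (simp add: col_def)
    qed (simp add: col_def)
    then have "majority_at E (col g) (a n) \<longleftrightarrow> majority_at E (col f) (a n)"
      by (rule majority_at_cong)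
    then show "g \<in> C n"
      using \<open>f \<in> C n\<close> by (simp add: C_def)
  next
    fix n
    obtain c where c: "\<forall>u. u \<notin> a ` {..n} \<longrightarrow> c u = c0 u"
      and majority: "\<forall>v\<in>a ` {..n}. majority_at E c v"
      using finite_majority_extension[OF assms(1,2), of "a ` {..n}" c0] a_in assms(4) by blast
    have "c u = c0 u" if "u \<notin> A" for u
    proof -
      have "u \<notin> a ` {..n}" using a_in that by auto
      then show ?thesis using c by blast
    qed
    then have "col (c \<circ> a) v = c v" for v
      using a_idx by (simp add: col_def)
    then have "col (c \<circ> a) = c" ..
    then have "\<forall>m\<le>n. c \<circ> a \<in> C m"
      using majority by (simp add: C_def)
    then show "\<exists>f. \<forall>m\<le>n. f \<in> C m" by blast
  qed
  then obtain f where "\<forall>n. f \<in> C n" by blast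
  then have "majority_at E (col f) v" if "v \<in> A" for v
    using a_idx[OF that] unfolding C_def by (metis mem_Collect_eq)
  moreover have "\<forall>u. u \<notin> A \<longrightarrow> col f u = c0 u" by (simp add: col_def)
  ultimately show ?thesis by blast
qed

lemma infinite_split_infinite:
  assumes "infinite T"
  obtains R where "R \<subseteq> T" and "infinite R" and "infinite (T - R)"
proof -
  obtain f :: "nat \<Rightarrow> _" where f: "inj f" "range f \<subseteq> T"
    using infinite_countable_subset[OF assms] by blast
  let ?evens = "range (\<lambda>n. f (2 * n))" and ?odds = "range (\<lambda>n. f (2 * n + 1))"
  have "infinite ?evens" "infinite ?odds"
    using f(1) by (auto intro!: range_inj_infinite simp: inj_def) fastforce+
  moreover have "f (2 * m + 1) \<noteq> f (2 * n)" for m n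
  proof
    assume "f (2 * m + 1) = f (2 * n)"
    then have "2 * m + 1 = 2 * n" by (rule injD[OF f(1)])
    then show False by presburger
  qed
  then have "?odds \<subseteq> T - ?evens"
    using f(2) by auto
  moreover have "?evens \<subseteq> T" using f(2) by auto
  ultimately show thesis using that finite_subset by metis
qed

lemma countable_almost_disjoint_refinement:
  assumes "countable I"
    and infinite: "\<And>x. x \<in> I \<Longrightarrow> infinite (K x)"
    and almost_disjoint: "\<And>x y. x \<in> I \<Longrightarrow> y \<in> I \<Longrightarrow> x \<noteq> y \<Longrightarrow> finite (K x \<inter> K y)"
  obtains T where "\<And>x. x \<in> I \<Longrightarrow> T x \<subseteq> K x" and "\<And>x. x \<in> I \<Longrightarrow> infinite (T x)"
    and "\<And>x y. x \<in> I \<Longrightarrow> y \<in> I \<Longrightarrow> x \<noteq> y \<Longrightarrow> T x \<inter> T y = {}"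
proof -
  define idx where "idx = to_nat_on I"
  have inj: "inj_on idx I"
    using assms(1) unfolding idx_def by (rule inj_on_to_nat_on)
  define before where "before x = idx -` {..<idx x} \<inter> I" for x
  define T where "T x = K x - (\<Union>y\<in>before x. K y)" for x
  have "infinite (T x)" if "x \<in> I" for x
  proof -
    have "finite (before x)"
      unfolding before_def using inj by (rule finite_vimage_IntI[OF finite_lessThan])
    then have "finite (\<Union>y\<in>before x. K x \<inter> K y)"
      by (rule finite_UN_I) (use almost_disjoint that in \<open>auto simp: before_def\<close>)
    moreover have "T x = K x - (\<Union>y\<in>before x. K x \<inter> K y)"
      by (auto simp: T_def)
    ultimately show ?thesis
      using infinite[OF that] by (metis Diff_infinite_finite)
  qed
  moreover have "T x \<inter> T y = {}" if "x \<in> I" "y \<in> I" "x \<noteq> y" for x y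
  proof -
    have "idx x \<noteq> idx y" using inj that by (meson inj_onD)
    then have "y \<in> before x \<or> x \<in> before y"
      using that by (auto simp: before_def)
    then show ?thesis by (auto simp: T_def)
  qed
  moreover have "T x \<subseteq> K x" for x by (auto simp: T_def)
  ultimately show thesis using that by blast
qed

lemma almost_disjoint_family_bicolouring:
  assumes "countable I"
    and infinite: "\<And>x. x \<in> I \<Longrightarrow> infinite (K x)"
    and almost_disjoint: "\<And>x y. x \<in> I \<Longrightarrow> y \<in> I \<Longrightarrow> x \<noteq> y \<Longrightarrow> finite (K x \<inter> K y)"
  obtains c :: "'a \<Rightarrow> bool"
  where "\<And>x. x \<in> I \<Longrightarrow> infinite {u \<in> K x. c u}"
    and "\<And>x. x \<in> I \<Longrightarrow> infinite {u \<in> K x. \<not> c u}"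
proof -
  obtain T where T_K: "\<And>x. x \<in> I \<Longrightarrow> T x \<subseteq> K x" and T_infinite: "\<And>x. x \<in> I \<Longrightarrow> infinite (T x)"
    and T_disjoint: "\<And>x y. x \<in> I \<Longrightarrow> y \<in> I \<Longrightarrow> x \<noteq> y \<Longrightarrow> T x \<inter> T y = {}"
    using countable_almost_disjoint_refinement[of I K] assms by blast
  have "\<forall>x\<in>I. \<exists>R. R \<subseteq> T x \<and> infinite R \<and> infinite (T x - R)"
    using infinite_split_infinite[OF T_infinite] by metis
  then obtain R where R: "\<And>x. x \<in> I \<Longrightarrow> R x \<subseteq> T x \<and> infinite (R x) \<and> infinite (T x - R x)"
    by metis
  define c where "c u \<longleftrightarrow> (\<exists>x\<in>I. u \<in> R x)" for u
  have "R x \<subseteq> {u \<in> K x. c u}" and "T x - R x \<subseteq> {u \<in> K x. \<not> c u}" if "x \<in> I" for x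
    using R T_K T_disjoint that unfolding c_def by blast+
  then show thesis
    using that R by (meson infinite_super)
qed

definition almost_disjoint_clique_cover ::
  "'a set \<Rightarrow> ('a \<Rightarrow> 'a \<Rightarrow> bool) \<Rightarrow> 'h set \<Rightarrow> ('h \<Rightarrow> 'a set) \<Rightarrow> bool" where
  "almost_disjoint_clique_cover V E I K \<longleftrightarrow> countable I \<and>
     (\<forall>x\<in>I. infinite (K x) \<and> (\<forall>u\<in>K x. \<forall>w\<in>K x. u \<noteq> w \<longrightarrow> E u w)) \<and>
     (\<forall>x\<in>I. \<forall>y\<in>I. x \<noteq> y \<longrightarrow> finite (K x \<inter> K y)) \<and>
     (\<forall>v\<in>V. infinite (nbhd E v) \<longrightarrow> (\<exists>x\<in>I. v \<in> K x))"

lemma majority_colouring_from_clique_cover: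
  assumes graph: "simple_graph V E" and "countable V"
    and "almost_disjoint_clique_cover V E I K"
  shows "\<exists>c. \<forall>v\<in>V. majority_at E c v"
proof -
  have "countable I"
    and infinite: "\<And>x. x \<in> I \<Longrightarrow> infinite (K x)"
    and clique: "\<And>x u w. x \<in> I \<Longrightarrow> u \<in> K x \<Longrightarrow> w \<in> K x \<Longrightarrow> u \<noteq> w \<Longrightarrow> E u w"
    and almost_disjoint: "\<And>x y. x \<in> I \<Longrightarrow> y \<in> I \<Longrightarrow> x \<noteq> y \<Longrightarrow> finite (K x \<inter> K y)"
    and cover: "\<And>v. v \<in> V \<Longrightarrow> infinite (nbhd E v) \<Longrightarrow> \<exists>x\<in>I. v \<in> K x"
    using assms(3) unfolding almost_disjoint_clique_cover_def by blast+
  have "symp E" and "irreflp E"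
    using graph by (auto simp: simple_graph_def symp_def irreflp_def)
  obtain c0 where c0_True: "\<And>x. x \<in> I \<Longrightarrow> infinite {u \<in> K x. c0 u}"
    and c0_False: "\<And>x. x \<in> I \<Longrightarrow> infinite {u \<in> K x. \<not> c0 u}"
    using almost_disjoint_family_bicolouring[of I K] \<open>countable I\<close> infinite almost_disjoint
    by blast
  define A where "A = {v \<in> V. finite (nbhd E v)}"
  have K_A: "K x \<inter> A = {}" if "x \<in> I" for x
  proof -
    have "infinite (nbhd E u)" if "u \<in> K x" for u
    proof (rule infinite_super)
      show "K x - {u} \<subseteq> nbhd E u"
        using clique \<open>x \<in> I\<close> that by (auto simp: nbhd_def)
      show "infinite (K x - {u})"
        using infinite[OF \<open>x \<in> I\<close>] by simp
    qed
    then show ?thesis by (auto simp: A_def)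
  qed
  have "countable A" using \<open>countable V\<close> by (auto simp: A_def intro: countable_subset)
  moreover have "\<forall>v\<in>A. finite (nbhd E v)" by (simp add: A_def)
  ultimately obtain c where c: "\<forall>u. u \<notin> A \<longrightarrow> c u = c0 u"
    and majority_A: "\<forall>v\<in>A. majority_at E c v"
    using countable_majority_extension[OF \<open>symp E\<close> \<open>irreflp E\<close>, of A c0] by blast
  have "majority_at E c v" if "v \<in> V" for v
  proof (cases "v \<in> A")
    case True
    with majority_A show ?thesis by blast
  next
    case False
    then obtain x where x: "x \<in> I" "v \<in> K x"
      using cover \<open>v \<in> V\<close> by (auto simp: A_def)
    have "{u \<in> K x. c u} = {u \<in> K x. c0 u}" and "{u \<in> K x. \<not> c u} = {u \<in> K x. \<not> c0 u}"
      using c K_A[OF x(1)] by auto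
    moreover have "countable (nbhd E v)"
      using simple_graph_nbhd_subset[OF graph] \<open>countable V\<close> countable_subset by blast
    ultimately show ?thesis
      using majority_at_in_bicoloured_clique[of E v "K x" c] clique[OF x(1)] x(2)
        c0_True[OF x(1)] c0_False[OF x(1)] by simp
  qed
  then show ?thesis by blast
qed

lemma line_graph_almost_disjoint_clique_cover:
  fixes F :: "'h \<Rightarrow> 'h \<Rightarrow> bool"
  assumes "simple_graph V E" and "countable V" and "is_line_graph_of V E W F"
  shows "\<exists>(I :: 'h set) K. almost_disjoint_clique_cover V E I K"
proof -
  obtain \<phi> where bij: "bij_betw \<phi> V (edge_set F)"
    and adj: "\<forall>u\<in>V. \<forall>v\<in>V. E u v \<longleftrightarrow> u \<noteq> v \<and> \<phi> u \<inter> \<phi> v \<noteq> {}"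
    using assms(3) unfolding is_line_graph_of_def by blast
  have ends: "\<exists>a b. \<phi> v = {a, b}" if "v \<in> V" for v
    using bij_betwE[OF bij] that by (fastforce simp: edge_set_def)
  then have finite_ends: "finite (\<phi> v)" if "v \<in> V" for v
    using that by fastforce
  define star where "star x = {u \<in> V. x \<in> \<phi> u}" for x
  define I where "I = {x. infinite (star x)}"
  have "I \<subseteq> (\<Union>v\<in>V. \<phi> v)"
    by (auto simp: I_def star_def dest: infinite_imp_nonempty)
  moreover have "countable (\<Union>v\<in>V. \<phi> v)"
    using assms(2) finite_ends by (simp add: countable_finite)
  ultimately have countable_I: "countable I" by (rule countable_subset)
  have star_clique: "E u w" if "u \<in> star x" "w \<in> star x" "u \<noteq> w" for x u w
    using adj that by (auto simp: star_def)
  have star_almost_disjoint: "finite (star x \<inter> star y)" if "x \<noteq> y" for x y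
  proof (rule finite_imageD)
    show "finite (\<phi> ` (star x \<inter> star y))"
    proof (rule finite_subset)
      show "\<phi> ` (star x \<inter> star y) \<subseteq> {{x, y}}"
        using ends that by (fastforce simp: star_def)
    qed simp
    show "inj_on \<phi> (star x \<inter> star y)"
      using bij by (auto simp: bij_betw_def star_def intro: inj_on_subset)
  qed
  have star_cover: "\<exists>x\<in>I. v \<in> star x" if v: "v \<in> V" and infinite: "infinite (nbhd E v)" for v
  proof -
    have "nbhd E v \<subseteq> (\<Union>x\<in>\<phi> v. star x)"
    proof
      fix u assume "u \<in> nbhd E v"
      then have "u \<in> V" and "E v u"
        using simple_graph_nbhd_subset[OF assms(1)] by (auto simp: nbhd_def)
      then have "\<phi> v \<inter> \<phi> u \<noteq> {}" using adj v by blast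
      then show "u \<in> (\<Union>x\<in>\<phi> v. star x)" using \<open>u \<in> V\<close> by (auto simp: star_def)
    qed
    then obtain x where "x \<in> \<phi> v" and "infinite (star x)"
      using infinite finite_ends[OF v] by (meson finite_UN_I finite_subset)
    then show ?thesis
      using v by (auto simp: I_def star_def)
  qed
  have "almost_disjoint_clique_cover V E I star"
    unfolding almost_disjoint_clique_cover_def
    using countable_I star_clique star_almost_disjoint star_cover by (auto simp: I_def)
  then show ?thesis by blast
qed

theorem mainTheorem5:
  fixes V :: "'a set" and E :: "'a \<Rightarrow> 'a \<Rightarrow> bool"
    and W :: "'h set" and F :: "'h \<Rightarrow> 'h \<Rightarrow> bool"
  assumes "simple_graph V E"
    and "countable V" and "infinite V"
    and "is_line_graph_of V E W F"
  shows "\<exists>V1 V2. majority_2_colouring V E V1 V2"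
proof -
  obtain I :: "'h set" and K where "almost_disjoint_clique_cover V E I K"
    using line_graph_almost_disjoint_clique_cover[OF assms(1,2,4)] by blast
  then obtain c where "\<forall>v\<in>V. majority_at E c v"
    using majority_colouring_from_clique_cover[OF assms(1,2)] by blast
  then have "majority_2_colouring V E {v \<in> V. c v} {v \<in> V. \<not> c v}"
    using majority_2_colouringI simple_graph_nbhd_subset[OF assms(1)] by blast
  then show ?thesis by blast
qed

end
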